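(* Let $f$ be a binary NAM on $n$ features, $x\in\mathbb{R}^n$, $\epsilon>0$. Suppose real numbers $\ell_k\le u_k$ ($k\in[n]$) satisfy $\ell_k\le\Delta_k\le u_k$ for every $k$. Let $S\subseteq[n]$ be a sufficient explanation for $(f,x,\epsilon)$, let $i\in S$ and $j\notin S$, and suppose $u_i\le \ell_j$ (in particular, this holds whenever the intervals $[\ell_k,u_k]$ are pairwise non-overlapping and $i$ precedes $j$ in the ascending order of these intervals). Then $(S\setminus\{i\})\cup\{j\}$ is also a sufficient explanation for $(f,x,\epsilon)$.
   Context: A binary neural additive model (NAM) on $n$ features is a map $f:\mathbb{R}^n\to\{0,1\}$, $f(z)=\mathrm{step}\big(\beta_0+\sum_{k=1}^n f_k(z_k)\big)$, where $\beta_0\in\mathbb{R}$, each $f_k:\mathbb{R}\to\mathbb{R}$ is continuous (in the paper, a univariate ReLU neural network), and $\mathrm{step}(t)=1$ if $t\ge 0$ and $\mathrm{step}(t)=0$ otherwise. Fix $x\in\mathbb{R}^n$ and $\epsilon>0$ and let $B=\{\tilde x\in\mathbb{R}^n : |\tilde x_k-x_k|\le\epsilon \text{ for all } k\}$. For $S\subseteq[n]=\{1,\dots,n\}$ and $\tilde x\in\mathbb{R}^n$, $(x_S;\tilde x_{\bar S})$ denotes the vector agreeing with $x$ on the coordinates in $S$ and with $\tilde x$ on $\bar S=[n]\setminus S$. A set $S$ is a sufficient explanation for $(f,x,\epsilon)$ if $f(x_S;\tilde x_{\bar S})=f(x)$ for all $\tilde x\in B$. The importance of feature $k$ is $\Delta_k=f_k(x_k)-\min_{|t-x_k|\le\epsilon}f_k(t)$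 if $f(x)=1$, and $\Delta_k=\max_{|t-x_k|\le\epsilon}f_k(t)-f_k(x_k)$ if $f(x)=0$. *)

theory Defs
  imports "HOL-Analysis.Analysis"
begin

text \<open>Features are indexed by [n] = {1..n}; vectors in R^n are represented as
  functions nat => real of which only the coordinates 1..n matter.\<close>

definition step :: "real \<Rightarrow> nat" where
  "step t = (if t \<ge> 0 then 1 else 0)"

definition nam :: "nat \<Rightarrow> real \<Rightarrow> (nat \<Rightarrow> real \<Rightarrow> real) \<Rightarrow> (nat \<Rightarrow> real) \<Rightarrow> nat" where
  "nam n b0 fs z = step (b0 + (\<Sum>k=1..n. fs k (z k)))"

definition box :: "nat \<Rightarrow> (nat \<Rightarrow> real) \<Rightarrow> real \<Rightarrow> (nat \<Rightarrow> real) set" where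
  "box n x eps = {xt. \<forall>k\<in>{1..n}. \<bar>xt k - x k\<bar> \<le> eps}"

definition combine :: "nat set \<Rightarrow> (nat \<Rightarrow> real) \<Rightarrow> (nat \<Rightarrow> real) \<Rightarrow> (nat \<Rightarrow> real)" where
  "combine S x xt = (\<lambda>k. if k \<in> S then x k else xt k)"

definition sufficient_expl ::
  "nat \<Rightarrow> real \<Rightarrow> (nat \<Rightarrow> real \<Rightarrow> real) \<Rightarrow> (nat \<Rightarrow> real) \<Rightarrow> real \<Rightarrow> nat set \<Rightarrow> bool" where
  "sufficient_expl n b0 fs x eps S \<longleftrightarrow> S \<subseteq> {1..n} \<and>
     (\<forall>xt\<in>box n x eps. nam n b0 fs (combine S x xt) = nam n b0 fs x)"

text \<open>Importance Delta_k; min/max over the compact interval are attained by continuity,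
  so Inf/Sup of the image coincide with min/max.\<close>
definition importance ::
  "nat \<Rightarrow> real \<Rightarrow> (nat \<Rightarrow> real \<Rightarrow> real) \<Rightarrow> (nat \<Rightarrow> real) \<Rightarrow> real \<Rightarrow> nat \<Rightarrow> real" where
  "importance n b0 fs x eps k =
     (if nam n b0 fs x = 1
      then fs k (x k) - Inf (fs k ` {x k - eps .. x k + eps})
      else Sup (fs k ` {x k - eps .. x k + eps}) - fs k (x k))"

end

theory Submission
  imports Defs
begin

text \<open>Let \<open>\<sigma> = 1\<close> if \<open>f(x) = 1\<close> and \<open>\<sigma> = -1\<close> otherwise. Then \<open>\<Delta>\<^sub>k\<close> is the largest amount
  \<open>\<sigma>(f\<^sub>k(x\<^sub>k) - f\<^sub>k(t))\<close> by which feature \<open>k\<close> can move the logit against the decision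
  within the box, and it is attained by continuity. Given \<open>x'\<close> in the box, compare the input
  that fixes \<open>S - {i} \<union> {j}\<close> with the input that fixes \<open>S\<close> but moves feature \<open>j\<close> to its worst
  point: relative to the latter, the former loses at most \<open>\<Delta>\<^sub>i\<close> at feature \<open>i\<close> and regains
  exactly \<open>\<Delta>\<^sub>j\<close> at feature \<open>j\<close>. As \<open>\<Delta>\<^sub>i \<le> \<Delta>\<^sub>j\<close>, its logit is at least as far on the side of
  the decision \<open>f(x)\<close>, which sufficiency of \<open>S\<close> guarantees for the latter.\<close>

definition polarity :: "nat \<Rightarrow> real \<Rightarrow> (nat \<Rightarrow> real \<Rightarrow> real) \<Rightarrow> (nat \<Rightarrow> real) \<Rightarrow> real" where
  "polarity n b0 fs x = (if nam n b0 fs x = 1 then 1 else -1)"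

lemma nam_eq_1_iff: "nam n b0 fs z = 1 \<longleftrightarrow> 0 \<le> b0 + (\<Sum>k=1..n. fs k (z k))"
  unfolding nam_def step_def by simp

lemma nam_eq_if_logit_toward_polarity:
  assumes "nam n b0 fs w = nam n b0 fs x"
    and "0 \<le> polarity n b0 fs x * ((\<Sum>k=1..n. fs k (v k)) - (\<Sum>k=1..n. fs k (w k)))"
  shows "nam n b0 fs v = nam n b0 fs x"
proof (cases "nam n b0 fs x = 1")
  case True
  then have "(\<Sum>k=1..n. fs k (w k)) \<le> (\<Sum>k=1..n. fs k (v k))"
    using assms(2) unfolding polarity_def by simp
  moreover have "nam n b0 fs w = 1"
    using True assms(1) by simp
  ultimately have "nam n b0 fs v = 1"
    unfolding nam_eq_1_iff by linarith
  with True show ?thesis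
    by simp
next
  case False
  then have "(\<Sum>k=1..n. fs k (v k)) \<le> (\<Sum>k=1..n. fs k (w k))"
    using assms(2) unfolding polarity_def by simp
  moreover have "nam n b0 fs w \<noteq> 1"
    using False assms(1) by simp
  ultimately have "nam n b0 fs v \<noteq> 1"
    unfolding nam_eq_1_iff by linarith
  then show ?thesis
    using False unfolding nam_def step_def by (simp split: if_splits)
qed

lemma importance_bounds_deviation:
  assumes "continuous_on UNIV (fs k)" and "eps \<ge> 0"
  shows "\<And>t. t \<in> {x k - eps .. x k + eps} \<Longrightarrow>
           polarity n b0 fs x * (fs k (x k) - fs k t) \<le> importance n b0 fs x eps k"
    and "\<exists>t\<in>{x k - eps .. x k + eps}.
           polarity n b0 fs x * (fs k (x k) - fs k t) = importance n b0 fs x eps k"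
proof -
  let ?I = "{x k - eps .. x k + eps}"
  obtain c d where image: "fs k ` ?I = {c..d}" and "c \<le> d"
    using continuous_image_closed_interval[of "x k - eps" "x k + eps" "fs k"] assms
      continuous_on_subset by fastforce
  then have Inf: "Inf (fs k ` ?I) = c" and Sup: "Sup (fs k ` ?I) = d"
    by simp_all
  have range: "fs k t \<in> {c..d}" if "t \<in> ?I" for t
    using image that by blast
  show "polarity n b0 fs x * (fs k (x k) - fs k t) \<le> importance n b0 fs x eps k"
    if "t \<in> ?I" for t
    using range[OF that] unfolding importance_def polarity_def Inf Sup by auto
  have "c \<in> fs k ` ?I" and "d \<in> fs k ` ?I"
    using image \<open>c \<le> d\<close> by auto
  then obtain tc td where tc: "tc \<in> ?I" "fs k tc = c" and td: "td \<in> ?I" "fs k td = d"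
    by blast
  show "\<exists>t\<in>?I. polarity n b0 fs x * (fs k (x k) - fs k t) = importance n b0 fs x eps k"
  proof (cases "nam n b0 fs x = 1")
    case True
    then show ?thesis
      using tc unfolding importance_def polarity_def Inf Sup by (intro bexI[of _ tc]) simp_all
  next
    case False
    then show ?thesis
      using td unfolding importance_def polarity_def Inf Sup by (intro bexI[of _ td]) simp_all
  qed
qed

lemma box_coordinate:
  "xt \<in> box n x eps \<Longrightarrow> k \<in> {1..n} \<Longrightarrow> xt k \<in> {x k - eps .. x k + eps}"
  unfolding box_def by (auto simp: abs_le_iff dest!: bspec[where x = k])

lemma box_fun_upd:
  "xt \<in> box n x eps \<Longrightarrow> t \<in> {x j - eps .. x j + eps} \<Longrightarrow> xt(j := t) \<in> box n x eps"
  unfolding box_def by (auto simp: abs_le_iff)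

lemma sum_eq_off_two_points:
  fixes g h :: "'a \<Rightarrow> 'b::ab_group_add"
  assumes "finite A" "i \<in> A" "j \<in> A" "i \<noteq> j"
    and "\<And>k. k \<in> A \<Longrightarrow> k \<noteq> i \<Longrightarrow> k \<noteq> j \<Longrightarrow> g k = h k"
  shows "sum g A = sum h A + (g i - h i) + (g j - h j)"
proof -
  have "sum g A - sum h A = (\<Sum>k\<in>A. g k - h k)"
    by (simp add: sum_subtractf)
  also have "\<dots> = (\<Sum>k\<in>{i, j}. g k - h k)"
    using assms by (intro sum.mono_neutral_right) auto
  also have "\<dots> = (g i - h i) + (g j - h j)"
    using \<open>i \<noteq> j\<close> by simp
  finally show ?thesis
    by (simp add: algebra_simps)
qed

lemma sum_combine_swap:
  fixes g :: "nat \<Rightarrow> real \<Rightarrow> 'a::ab_group_add"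
  assumes "i \<in> S" "j \<notin> S" "i \<in> {1..n}" "j \<in> {1..n}"
  shows "(\<Sum>k=1..n. g k (combine (insert j (S - {i})) x xt k))
       = (\<Sum>k=1..n. g k (combine S x (xt(j := t)) k))
         + (g i (xt i) - g i (x i)) + (g j (x j) - g j t)"
proof -
  let ?S' = "insert j (S - {i})" and ?z = "xt(j := t)"
  have "i \<noteq> j"
    using assms by blast
  then have coordinates: "combine ?S' x xt i = xt i" "combine S x ?z i = x i"
    "combine ?S' x xt j = x j" "combine S x ?z j = t"
    using assms by (auto simp: combine_def)
  have "(\<Sum>k=1..n. g k (combine ?S' x xt k)) = (\<Sum>k=1..n. g k (combine S x ?z k))
      + (g i (combine ?S' x xt i) - g i (combine S x ?z i))
      + (g j (combine ?S' x xt j) - g j (combine S x ?z j))"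
    using assms \<open>i \<noteq> j\<close> by (intro sum_eq_off_two_points) (auto simp: combine_def)
  then show ?thesis
    unfolding coordinates .
qed

lemma sufficient_expl_swap:
  assumes cont_i: "continuous_on UNIV (fs i)" and cont_j: "continuous_on UNIV (fs j)"
    and "eps \<ge> 0"
    and suff: "sufficient_expl n b0 fs x eps S"
    and iS: "i \<in> S" and jS: "j \<in> {1..n} - S"
    and importance_le: "importance n b0 fs x eps i \<le> importance n b0 fs x eps j"
  shows "sufficient_expl n b0 fs x eps (insert j (S - {i}))"
  unfolding sufficient_expl_def
proof (intro conjI ballI)
  have S: "S \<subseteq> {1..n}"
    and S_fixes: "\<And>z. z \<in> box n x eps \<Longrightarrow> nam n b0 fs (combine S x z) = nam n b0 fs x"
    using suff unfolding sufficient_expl_def by auto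
  then have i: "i \<in> {1..n}" and j: "j \<in> {1..n}" "j \<notin> S"
    using iS jS by auto
  then show "insert j (S - {i}) \<subseteq> {1..n}"
    using S by auto
  fix xt assume xt: "xt \<in> box n x eps"
  let ?\<sigma> = "polarity n b0 fs x" and ?\<Delta> = "importance n b0 fs x eps"
  obtain t where t: "t \<in> {x j - eps .. x j + eps}"
    and gain_j: "?\<sigma> * (fs j (x j) - fs j t) = ?\<Delta> j"
    using importance_bounds_deviation(2)[where fs = fs and k = j, OF cont_j \<open>eps \<ge> 0\<close>] by blast
  have loss_i: "?\<sigma> * (fs i (x i) - fs i (xt i)) \<le> ?\<Delta> i"
    using importance_bounds_deviation(1)[where fs = fs and k = i, OF cont_i \<open>eps \<ge> 0\<close>] box_coordinate[OF xt i] .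
  have "?\<sigma> * ((\<Sum>k=1..n. fs k (combine (insert j (S - {i})) x xt k))
                - (\<Sum>k=1..n. fs k (combine S x (xt(j := t)) k)))
      = ?\<sigma> * (fs j (x j) - fs j t) - ?\<sigma> * (fs i (x i) - fs i (xt i))"
    unfolding sum_combine_swap[OF iS j(2) i j(1), where g = fs and x = x and xt = xt and t = t]
    by (simp add: algebra_simps)
  also have "\<dots> \<ge> 0"
    using gain_j loss_i importance_le by linarith
  finally have "0 \<le> ?\<sigma> * ((\<Sum>k=1..n. fs k (combine (insert j (S - {i})) x xt k))
                             - (\<Sum>k=1..n. fs k (combine S x (xt(j := t)) k)))" .
  with S_fixes[OF box_fun_upd[OF xt t]]
  show "nam n b0 fs (combine (insert j (S - {i})) x xt) = nam n b0 fs x"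
    by (rule nam_eq_if_logit_toward_polarity)
qed

theorem proposition1:
  fixes n :: nat and b0 :: real and fs :: "nat \<Rightarrow> real \<Rightarrow> real"
    and x :: "nat \<Rightarrow> real" and eps :: real and l u :: "nat \<Rightarrow> real"
    and S :: "nat set" and i j :: nat
  assumes cont: "\<And>k. k \<in> {1..n} \<Longrightarrow> continuous_on UNIV (fs k)"
    and eps_pos: "eps > 0"
    and lu: "\<And>k. k \<in> {1..n} \<Longrightarrow> l k \<le> u k"
    and lower: "\<And>k. k \<in> {1..n} \<Longrightarrow> l k \<le> importance n b0 fs x eps k"
    and upper: "\<And>k. k \<in> {1..n} \<Longrightarrow> importance n b0 fs x eps k \<le> u k"
    and suff: "sufficient_expl n b0 fs x eps S"
    and iS: "i \<in> S"
    and jS: "j \<in> {1..n} - S"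
    and uil: "u i \<le> l j"
  shows "sufficient_expl n b0 fs x eps (insert j (S - {i}))"
proof (rule sufficient_expl_swap[OF cont cont])
  have "S \<subseteq> {1..n}"
    using suff unfolding sufficient_expl_def by blast
  then show "i \<in> {1..n}" and "j \<in> {1..n}"
    using iS jS by auto
  \<comment> \<open>The bounds enter only through \<open>\<Delta>\<^sub>i \<le> u\<^sub>i \<le> l\<^sub>j \<le> \<Delta>\<^sub>j\<close>.\<close>
  then show "importance n b0 fs x eps i \<le> importance n b0 fs x eps j"
    using upper lower uil by (meson order_trans)
qed (use eps_pos suff iS jS in auto)

end
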